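(* Let $\mathcal C$ be a category with a class of fibrations and a class of cofibrations, let $X$ be a cofibrant object admitting at least one (weak) cylinder object and let $Y$ be a fibrant object admitting at least one (weak) path object. Then the homotopy relation on maps $X\to Y$ is an equivalence relation; more precisely, for any fixed weak cylinder object of $X$ or weak path object of $Y$, the relation "homotopic relative to it" is an equivalence relation (and these relations all coincide).
   Context: A class of cofibrations on $\mathcal C$: a class of maps such that $\mathcal C$ has a cofibrant initial object $0$ ($X$ cofibrant means $0\to X$ is a cofibration), isomorphisms with cofibrant domain are cofibrations, cofibrations compose, and pushouts of a cofibration $A\to B$ along $A\to C$ with $A,C$ cofibrant exist with $C\to C\sqcup_AB$ a cofibration. A class of fibrations is a class of cofibrations in $\mathcal C^{op}$. An acyclic cofibration is a cofibration with the left lifting property against all fibrations between fibrant objects; an acyclic fibration is a fibration with the right lifting property against all cofibrations between cofibrant objects. A weak cylinder object for a cofibrant $X$ is a commutative square with a cofibration $X\sqcup X\hookrightarrow IX$, the codiagonal $X\sqcup X\to X$, a map $IX\to DX$ and an acyclic cofibration $X\to DX$, such that the first inclusion $X\to IX$ is an acyclic cofibration (strong if $DX=X$). A weak path object for a fibrant $Y$ is dually a square with a fibration $PY\to Y\times Y$, the diagonal, a map $TY\to PY$ and an acyclic fibration $TY\to Y$, such that the first projection $PY\to Y$ is an acyclic fibration. Maps $f,g\colon X\to Y$ are homotopic relative to a cylinder object $IX$ if $(f,g)\colon X\sqcup X\to Y$ factors through $X\sqcup X\to IX$, and relative to a path object $PY$ if $(f,g)\colon X\to Y\times Y$ factors through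 $PY\to Y\times Y$. *)

theory Defs
  imports Main
begin

record ('o, 'a) category =
  obj :: "'o set"
  arr :: "'a set"
  src :: "'a \<Rightarrow> 'o"
  tgt :: "'a \<Rightarrow> 'o"
  cmp :: "'a \<Rightarrow> 'a \<Rightarrow> 'a"   (* cmp C g f = g o f *)
  idm :: "'o \<Rightarrow> 'a"

definition hom :: "('o, 'a) category \<Rightarrow> 'o \<Rightarrow> 'o \<Rightarrow> 'a set" where
  "hom C x y = {f \<in> arr C. src C f = x \<and> tgt C f = y}"

definition is_category :: "('o, 'a) category \<Rightarrow> bool" where
  "is_category C \<longleftrightarrow>
     (\<forall>f\<in>arr C. src C f \<in> obj C \<and> tgt C f \<in> obj C) \<and>
     (\<forall>x\<in>obj C. idm C x \<in> hom C x x) \<and>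
     (\<forall>f\<in>arr C. \<forall>g\<in>arr C. tgt C f = src C g \<longrightarrow> cmp C g f \<in> hom C (src C f) (tgt C g)) \<and>
     (\<forall>f\<in>arr C. cmp C (idm C (tgt C f)) f = f \<and> cmp C f (idm C (src C f)) = f) \<and>
     (\<forall>f\<in>arr C. \<forall>g\<in>arr C. \<forall>h\<in>arr C. tgt C f = src C g \<and> tgt C g = src C h \<longrightarrow>
         cmp C h (cmp C g f) = cmp C (cmp C h g) f)"

definition op :: "('o, 'a) category \<Rightarrow> ('o, 'a) category" where
  "op C = C\<lparr>src := tgt C, tgt := src C, cmp := (\<lambda>g f. cmp C f g)\<rparr>"

definition is_initial :: "('o, 'a) category \<Rightarrow> 'o \<Rightarrow> bool" where
  "is_initial C z \<longleftrightarrow> z \<in> obj C \<and> (\<forall>x\<in>obj C. \<exists>!f. f \<in> hom C z x)"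

definition is_iso :: "('o, 'a) category \<Rightarrow> 'a \<Rightarrow> bool" where
  "is_iso C f \<longleftrightarrow> f \<in> arr C \<and>
     (\<exists>g\<in>hom C (tgt C f) (src C f). cmp C g f = idm C (src C f) \<and> cmp C f g = idm C (tgt C f))"

definition is_pushout :: "('o, 'a) category \<Rightarrow> 'a \<Rightarrow> 'a \<Rightarrow> 'a \<Rightarrow> 'a \<Rightarrow> bool" where
  "is_pushout C f g i j \<longleftrightarrow>
     f \<in> arr C \<and> g \<in> arr C \<and> src C f = src C g \<and>
     i \<in> hom C (tgt C g) (tgt C i) \<and> j \<in> hom C (tgt C f) (tgt C i) \<and>
     cmp C i g = cmp C j f \<and>
     (\<forall>Z u v. u \<in> hom C (tgt C g) Z \<and> v \<in> hom C (tgt C f) Z \<and> cmp C u g = cmp C v f \<longrightarrow>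
        (\<exists>!h. h \<in> hom C (tgt C i) Z \<and> cmp C h i = u \<and> cmp C h j = v))"

definition is_coproduct :: "('o, 'a) category \<Rightarrow> 'o \<Rightarrow> 'o \<Rightarrow> 'a \<Rightarrow> 'a \<Rightarrow> bool" where
  "is_coproduct C X S i1 i2 \<longleftrightarrow>
     i1 \<in> hom C X S \<and> i2 \<in> hom C X S \<and>
     (\<forall>Z f g. f \<in> hom C X Z \<and> g \<in> hom C X Z \<longrightarrow>
        (\<exists>!h. h \<in> hom C S Z \<and> cmp C h i1 = f \<and> cmp C h i2 = g))"

definition cofibrant :: "('o, 'a) category \<Rightarrow> 'a set \<Rightarrow> 'o \<Rightarrow> bool" where
  "cofibrant C K x \<longleftrightarrow>
     (\<exists>z f. is_initial C z \<and> idm C z \<in> K \<and> f \<in> hom C z x \<and> f \<in> K)"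

definition cofibration_class :: "('o, 'a) category \<Rightarrow> 'a set \<Rightarrow> bool" where
  "cofibration_class C K \<longleftrightarrow>
     K \<subseteq> arr C \<and>
     (\<exists>z. is_initial C z \<and> idm C z \<in> K) \<and>
     (\<forall>f. is_iso C f \<and> cofibrant C K (src C f) \<longrightarrow> f \<in> K) \<and>
     (\<forall>f g. f \<in> K \<and> g \<in> K \<and> tgt C f = src C g \<longrightarrow> cmp C g f \<in> K) \<and>
     (\<forall>f g. f \<in> K \<and> g \<in> arr C \<and> src C g = src C f \<and>
            cofibrant C K (src C f) \<and> cofibrant C K (tgt C g) \<longrightarrow>
        (\<exists>i j. is_pushout C f g i j \<and> i \<in> K))"

definition fibration_class :: "('o, 'a) category \<Rightarrow> 'a set \<Rightarrow> bool" where
  "fibration_class C K \<longleftrightarrow> cofibration_class (op C) K"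

definition fibrant :: "('o, 'a) category \<Rightarrow> 'a set \<Rightarrow> 'o \<Rightarrow> bool" where
  "fibrant C K y \<longleftrightarrow> cofibrant (op C) K y"

definition llp :: "('o, 'a) category \<Rightarrow> 'a \<Rightarrow> 'a \<Rightarrow> bool" where
  "llp C i p \<longleftrightarrow>
     (\<forall>u v. u \<in> hom C (src C i) (src C p) \<and> v \<in> hom C (tgt C i) (tgt C p) \<and>
            cmp C p u = cmp C v i \<longrightarrow>
        (\<exists>h\<in>hom C (tgt C i) (src C p). cmp C h i = u \<and> cmp C p h = v))"

definition acyclic_cof :: "('o, 'a) category \<Rightarrow> 'a set \<Rightarrow> 'a set \<Rightarrow> 'a \<Rightarrow> bool" where
  "acyclic_cof C cof fib i \<longleftrightarrow>
     i \<in> cof \<and>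
     (\<forall>p\<in>fib. fibrant C fib (src C p) \<and> fibrant C fib (tgt C p) \<longrightarrow> llp C i p)"

definition acyclic_fib :: "('o, 'a) category \<Rightarrow> 'a set \<Rightarrow> 'a set \<Rightarrow> 'a \<Rightarrow> bool" where
  "acyclic_fib C cof fib p \<longleftrightarrow>
     p \<in> fib \<and>
     (\<forall>i\<in>cof. cofibrant C cof (src C i) \<and> cofibrant C cof (tgt C i) \<longrightarrow> llp C i p)"

record 'a cyl_data =
  cin1 :: 'a     (* X \<rightarrow> X \<squnion> X *)
  cin2 :: 'a     (* X \<rightarrow> X \<squnion> X *)
  cincl :: 'a    (* X \<squnion> X \<rightarrow> IX, cofibration *)
  ccodiag :: 'a  (* X \<squnion> X \<rightarrow> X *)
  cq :: 'a       (* IX \<rightarrow> DX *)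
  cd :: 'a       (* X \<rightarrow> DX, acyclic cofibration *)

definition weak_cylinder ::
  "('o, 'a) category \<Rightarrow> 'a set \<Rightarrow> 'a set \<Rightarrow> 'o \<Rightarrow> 'a cyl_data \<Rightarrow> bool" where
  "weak_cylinder C cof fib X c \<longleftrightarrow>
     is_coproduct C X (tgt C (cin1 c)) (cin1 c) (cin2 c) \<and>
     cincl c \<in> cof \<and> src C (cincl c) = tgt C (cin1 c) \<and>
     ccodiag c \<in> hom C (tgt C (cin1 c)) X \<and>
     cmp C (ccodiag c) (cin1 c) = idm C X \<and> cmp C (ccodiag c) (cin2 c) = idm C X \<and>
     acyclic_cof C cof fib (cd c) \<and> src C (cd c) = X \<and>
     cq c \<in> hom C (tgt C (cincl c)) (tgt C (cd c)) \<and>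
     cmp C (cq c) (cincl c) = cmp C (cd c) (ccodiag c) \<and>
     acyclic_cof C cof fib (cmp C (cincl c) (cin1 c))"

text \<open>Unfolded: product Y \<times> Y with projections
  cin1, cin2, a fibration cincl : PY \<rightarrow> Y \<times> Y, the diagonal ccodiag : Y \<rightarrow> Y \<times> Y,
  cq : TY \<rightarrow> PY, an acyclic fibration cd : TY \<rightarrow> Y, cincl o cq = ccodiag o cd, and
  cin1 o cincl an acyclic fibration.\<close>
definition weak_path ::
  "('o, 'a) category \<Rightarrow> 'a set \<Rightarrow> 'a set \<Rightarrow> 'o \<Rightarrow> 'a cyl_data \<Rightarrow> bool" where
  "weak_path C cof fib Y c \<longleftrightarrow> weak_cylinder (op C) fib cof Y c"

definition homotopic_cyl ::
  "('o, 'a) category \<Rightarrow> 'o \<Rightarrow> 'o \<Rightarrow> 'a cyl_data \<Rightarrow> 'a \<Rightarrow> 'a \<Rightarrow> bool" where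
  "homotopic_cyl C X Y c f g \<longleftrightarrow>
     f \<in> hom C X Y \<and> g \<in> hom C X Y \<and>
     (\<exists>k H. k \<in> hom C (tgt C (cin1 c)) Y \<and> cmp C k (cin1 c) = f \<and> cmp C k (cin2 c) = g \<and>
            H \<in> hom C (tgt C (cincl c)) Y \<and> cmp C H (cincl c) = k)"

definition homotopic_path ::
  "('o, 'a) category \<Rightarrow> 'o \<Rightarrow> 'o \<Rightarrow> 'a cyl_data \<Rightarrow> 'a \<Rightarrow> 'a \<Rightarrow> bool" where
  "homotopic_path C X Y c f g \<longleftrightarrow> homotopic_cyl (op C) Y X c f g"

definition homotopic ::
  "('o, 'a) category \<Rightarrow> 'a set \<Rightarrow> 'a set \<Rightarrow> 'o \<Rightarrow> 'o \<Rightarrow> 'a \<Rightarrow> 'a \<Rightarrow> bool" where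
  "homotopic C cof fib X Y f g \<longleftrightarrow>
     (\<exists>c. weak_cylinder C cof fib X c \<and> homotopic_cyl C X Y c f g) \<or>
     (\<exists>p. weak_path C cof fib Y p \<and> homotopic_path C X Y p f g)"

end

theory Submission
  imports Defs
begin

(* The key step transports path homotopies along a cylinder: if V1, V2 : IX -> Y restrict to
   path-homotopic maps on the first end of IX, they restrict to path-homotopic maps on the second
   end. This is a lift of the acyclic cofibration X -> IX against the fibration PY -> Y x Y between
   fibrant objects. Taking V1 or V2 constant turns a cylinder homotopy into a path homotopy and
   composes a cylinder homotopy with a path homotopy; constant homotopies exist because X -> DX is
   an acyclic cofibration and Y is fibrant. The dual argument in the opposite category turns path
   homotopies into cylinder homotopies, and symmetry and transitivity follow. *)

lemma op_simps [simp]: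
  "arr (op C) = arr C" "obj (op C) = obj C" "src (op C) = tgt C" "tgt (op C) = src C"
  "cmp (op C) g f = cmp C f g" "idm (op C) = idm C" "op (op C) = C"
  by (simp_all add: op_def)

lemma hom_op [simp]: "hom (op C) x y = hom C y x"
  by (auto simp: hom_def)

lemma llp_op [simp]: "llp (op C) i q = llp C q i"
  unfolding llp_def hom_op op_simps by (rule iffI; metis)

lemma is_category_op: "is_category C \<Longrightarrow> is_category (op C)"
  unfolding is_category_def by (auto simp: hom_def)

lemma fibrant_op [simp]: "fibrant (op C) K x \<longleftrightarrow> cofibrant C K x"
  by (simp add: fibrant_def)

lemma cofibrant_op [simp]: "cofibrant (op C) K x \<longleftrightarrow> fibrant C K x"
  by (simp add: fibrant_def)

lemma cofibration_class_op [simp]: "cofibration_class (op C) K \<longleftrightarrow> fibration_class C K"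
  by (simp add: fibration_class_def)

lemma fibration_class_op [simp]: "fibration_class (op C) K \<longleftrightarrow> cofibration_class C K"
  by (simp add: fibration_class_def)

lemma acyclic_cof_op [simp]: "acyclic_cof (op C) cof fib f \<longleftrightarrow> acyclic_fib C fib cof f"
  unfolding acyclic_cof_def acyclic_fib_def by auto

lemma weak_cylinder_op [simp]: "weak_cylinder (op C) cof fib X c \<longleftrightarrow> weak_path C fib cof X c"
  by (simp add: weak_path_def)

lemma weak_path_op [simp]: "weak_path (op C) cof fib Y p \<longleftrightarrow> weak_cylinder C fib cof Y p"
  by (simp add: weak_path_def)

lemma homotopic_cyl_op [simp]: "homotopic_cyl (op C) X Y c f g \<longleftrightarrow> homotopic_path C Y X c f g"
  by (simp add: homotopic_path_def)

lemma homotopic_path_op [simp]: "homotopic_path (op C) X Y p f g \<longleftrightarrow> homotopic_cyl C Y X p f g"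
  by (simp add: homotopic_path_def)

definition cyl_inc1 :: "('o, 'a) category \<Rightarrow> 'a cyl_data \<Rightarrow> 'a" where
  "cyl_inc1 C c = cmp C (cincl c) (cin1 c)"

definition cyl_inc2 :: "('o, 'a) category \<Rightarrow> 'a cyl_data \<Rightarrow> 'a" where
  "cyl_inc2 C c = cmp C (cincl c) (cin2 c)"

definition path_ev1 :: "('o, 'a) category \<Rightarrow> 'a cyl_data \<Rightarrow> 'a" where
  "path_ev1 C p = cmp C (cin1 p) (cincl p)"

definition path_ev2 :: "('o, 'a) category \<Rightarrow> 'a cyl_data \<Rightarrow> 'a" where
  "path_ev2 C p = cmp C (cin2 p) (cincl p)"

lemma cyl_inc_op [simp]: "cyl_inc1 (op C) p = path_ev1 C p" "cyl_inc2 (op C) p = path_ev2 C p"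
  by (simp_all add: cyl_inc1_def cyl_inc2_def path_ev1_def path_ev2_def)

lemma cofibration_classD:
  assumes "cofibration_class C K"
  shows cofibration_class_arr: "K \<subseteq> arr C"
    and cofibration_class_iso: "is_iso C f \<Longrightarrow> cofibrant C K (src C f) \<Longrightarrow> f \<in> K"
    and cofibration_class_comp: "f \<in> K \<Longrightarrow> g \<in> K \<Longrightarrow> tgt C f = src C g \<Longrightarrow> cmp C g f \<in> K"
    and cofibration_class_pushout: "f \<in> K \<Longrightarrow> g \<in> arr C \<Longrightarrow> src C g = src C f \<Longrightarrow>
      cofibrant C K (src C f) \<Longrightarrow> cofibrant C K (tgt C g) \<Longrightarrow> \<exists>i j. is_pushout C f g i j \<and> i \<in> K"
  using assms unfolding cofibration_class_def by blast+

lemma coproduct_injections: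
  "is_coproduct C X S i1 i2 \<Longrightarrow> i1 \<in> hom C X S" "is_coproduct C X S i1 i2 \<Longrightarrow> i2 \<in> hom C X S"
  by (simp_all add: is_coproduct_def)

lemma coproduct_universal:
  "is_coproduct C X S i1 i2 \<Longrightarrow> f \<in> hom C X Z \<Longrightarrow> g \<in> hom C X Z \<Longrightarrow>
    \<exists>!h. h \<in> hom C S Z \<and> cmp C h i1 = f \<and> cmp C h i2 = g"
  by (simp add: is_coproduct_def)

locale cat =
  fixes C :: "('o, 'a) category"
  assumes is_category: "is_category C"

lemma (in cat) cat_op: "cat (op C)"
  using is_category by (simp add: cat_def is_category_op)

context cat
begin

lemma obj_src [simp]: "f \<in> arr C \<Longrightarrow> src C f \<in> obj C"
  and obj_tgt [simp]: "f \<in> arr C \<Longrightarrow> tgt C f \<in> obj C"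
  using is_category unfolding is_category_def by auto

lemma idm_arr [simp]: "x \<in> obj C \<Longrightarrow> idm C x \<in> arr C"
  and src_idm [simp]: "x \<in> obj C \<Longrightarrow> src C (idm C x) = x"
  and tgt_idm [simp]: "x \<in> obj C \<Longrightarrow> tgt C (idm C x) = x"
  using is_category unfolding is_category_def hom_def by auto

lemma comp_arr [simp]: "f \<in> arr C \<Longrightarrow> g \<in> arr C \<Longrightarrow> tgt C f = src C g \<Longrightarrow> cmp C g f \<in> arr C"
  and src_comp [simp]: "f \<in> arr C \<Longrightarrow> g \<in> arr C \<Longrightarrow> tgt C f = src C g \<Longrightarrow> src C (cmp C g f) = src C f"
  and tgt_comp [simp]: "f \<in> arr C \<Longrightarrow> g \<in> arr C \<Longrightarrow> tgt C f = src C g \<Longrightarrow> tgt C (cmp C g f) = tgt C g"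
  using is_category unfolding is_category_def hom_def by auto

lemma comp_idm_left [simp]: "f \<in> arr C \<Longrightarrow> tgt C f = y \<Longrightarrow> cmp C (idm C y) f = f"
  and comp_idm_right [simp]: "f \<in> arr C \<Longrightarrow> src C f = x \<Longrightarrow> cmp C f (idm C x) = f"
  using is_category unfolding is_category_def by auto

lemma comp_assoc:
  "f \<in> arr C \<Longrightarrow> g \<in> arr C \<Longrightarrow> h \<in> arr C \<Longrightarrow> tgt C f = src C g \<Longrightarrow> tgt C g = src C h \<Longrightarrow>
    cmp C (cmp C h g) f = cmp C h (cmp C g f)"
  using is_category unfolding is_category_def by auto

lemma comp_in_hom [intro]: "f \<in> hom C x y \<Longrightarrow> g \<in> hom C y z \<Longrightarrow> cmp C g f \<in> hom C x z"
  by (simp add: hom_def)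

lemma idm_in_hom: "x \<in> obj C \<Longrightarrow> idm C x \<in> hom C x x"
  by (simp add: hom_def)

lemma initial_unique: "is_initial C z \<Longrightarrow> a \<in> hom C z x \<Longrightarrow> b \<in> hom C z x \<Longrightarrow> a = b"
proof -
  assume "is_initial C z" "a \<in> hom C z x" "b \<in> hom C z x"
  moreover from \<open>a \<in> hom C z x\<close> have "x \<in> obj C"
    by (auto simp: hom_def)
  ultimately show "a = b"
    unfolding is_initial_def by blast
qed

lemma coproduct_eqI:
  assumes "is_coproduct C X S i1 i2" "a \<in> hom C S Z" "b \<in> hom C S Z"
    and "cmp C a i1 = cmp C b i1" "cmp C a i2 = cmp C b i2"
  shows "a = b"
proof -
  have "cmp C a i1 \<in> hom C X Z" "cmp C a i2 \<in> hom C X Z"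
    using assms(2) coproduct_injections[OF assms(1)] by auto
  then show ?thesis
    using coproduct_universal[OF assms(1)] assms(2-5) by metis
qed

lemma coproduct_iso:
  assumes P: "is_coproduct C X P a b" and S: "is_coproduct C X S i1 i2"
  obtains e where "e \<in> hom C P S" "is_iso C e"
proof -
  obtain e where e: "e \<in> hom C P S" "cmp C e a = i1" "cmp C e b = i2"
    using coproduct_universal[OF P] coproduct_injections[OF S] by meson
  obtain e' where e': "e' \<in> hom C S P" "cmp C e' i1 = a" "cmp C e' i2 = b"
    using coproduct_universal[OF S] coproduct_injections[OF P] by meson
  have ab: "a \<in> hom C X P" "b \<in> hom C X P" and i12: "i1 \<in> hom C X S" "i2 \<in> hom C X S"
    using coproduct_injections[OF P] coproduct_injections[OF S] by auto
  have "cmp C e' e = idm C P"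
    by (rule coproduct_eqI[OF P]) (use e e' ab in \<open>auto simp: hom_def comp_assoc\<close>)
  moreover have "cmp C e e' = idm C S"
    by (rule coproduct_eqI[OF S]) (use e e' i12 in \<open>auto simp: hom_def comp_assoc\<close>)
  ultimately have "is_iso C e"
    using e(1) e'(1) unfolding is_iso_def hom_def by auto
  with e(1) show thesis by (rule that)
qed

lemma pushout_of_initial_is_coproduct:
  assumes z: "is_initial C z" and i0: "i0 \<in> hom C z X" and po: "is_pushout C i0 i0 i j"
  shows "is_coproduct C X (tgt C i) i j"
proof -
  have "cmp C u i0 = cmp C v i0" if "u \<in> hom C X Z" "v \<in> hom C X Z" for u v Z
    using initial_unique[OF z] comp_in_hom[OF i0] that by blast
  then show ?thesis
    using po i0 unfolding is_pushout_def is_coproduct_def hom_def by auto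
qed

lemma cofibrant_tgt:
  assumes K: "cofibration_class C K" and "f \<in> K" "cofibrant C K (src C f)"
  shows "cofibrant C K (tgt C f)"
proof -
  obtain z i0 where "is_initial C z" "idm C z \<in> K" "i0 \<in> hom C z (src C f)" "i0 \<in> K"
    using assms(3) unfolding cofibrant_def by blast
  moreover have "cmp C f i0 \<in> hom C z (tgt C f)"
    using cofibration_class_arr[OF K] \<open>f \<in> K\<close> \<open>i0 \<in> hom C z (src C f)\<close>
    by (auto simp: hom_def)
  moreover have "cmp C f i0 \<in> K"
    using cofibration_class_comp[OF K \<open>i0 \<in> K\<close> \<open>f \<in> K\<close>] \<open>i0 \<in> hom C z (src C f)\<close>
    by (simp add: hom_def)
  ultimately show ?thesis
    unfolding cofibrant_def by blast
qed

lemma initial_cofibrant: "is_initial C z \<Longrightarrow> idm C z \<in> K \<Longrightarrow> cofibrant C K z"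
  unfolding cofibrant_def is_initial_def using idm_in_hom by blast

text \<open>The coproduct is compared with the pushout of the initial map of X along itself.\<close>
lemma cofibrant_coproduct:
  assumes K: "cofibration_class C K" and X: "cofibrant C K X" and S: "is_coproduct C X S i1 i2"
  shows "cofibrant C K S"
proof -
  obtain z i0 where z: "is_initial C z" "idm C z \<in> K" and i0: "i0 \<in> hom C z X" "i0 \<in> K"
    using X unfolding cofibrant_def by blast
  have "\<exists>i j. is_pushout C i0 i0 i j \<and> i \<in> K"
    using cofibration_class_pushout[OF K i0(2)] i0 X initial_cofibrant[OF z]
    by (simp add: hom_def)
  then obtain i j where po: "is_pushout C i0 i0 i j" and "i \<in> K"
    by blast
  have "src C i = X"
    using po i0 unfolding is_pushout_def hom_def by auto
  then have P: "cofibrant C K (tgt C i)"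
    using cofibrant_tgt[OF K \<open>i \<in> K\<close>] X by simp
  obtain e where e: "e \<in> hom C (tgt C i) S" "is_iso C e"
    using coproduct_iso[OF pushout_of_initial_is_coproduct[OF z(1) i0(1) po] S] .
  then have "e \<in> K"
    using cofibration_class_iso[OF K] P by (simp add: hom_def)
  then show ?thesis
    using cofibrant_tgt[OF K _] P e(1) by (auto simp: hom_def)
qed

end

locale cof_fib_category = cat +
  fixes cof fib :: "'a set"
  assumes cofibration_class: "cofibration_class C cof"
    and fibration_class: "fibration_class C fib"

lemma (in cof_fib_category) dual: "cof_fib_category (op C) fib cof"
  using cat_op cofibration_class fibration_class
  by (simp add: cof_fib_category_def cof_fib_category_axioms_def)

context cof_fib_category
begin

lemma fibrant_src: "f \<in> fib \<Longrightarrow> fibrant C fib (tgt C f) \<Longrightarrow> fibrant C fib (src C f)"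
  using cat.cofibrant_tgt[OF cat_op, of fib f] fibration_class by simp

lemma fibrant_product: "fibrant C fib Y \<Longrightarrow> is_coproduct (op C) Y S p1 p2 \<Longrightarrow> fibrant C fib S"
  using cat.cofibrant_coproduct[OF cat_op, of fib Y S p1 p2] fibration_class by simp

text \<open>Lift against the fibration from Y to the terminal object.\<close>
lemma acyclic_cof_extension:
  assumes d: "acyclic_cof C cof fib d" and Y: "fibrant C fib Y" and f: "f \<in> hom C (src C d) Y"
  obtains h where "h \<in> hom C (tgt C d) Y" "cmp C h d = f"
proof -
  obtain T t where T: "is_initial (op C) T" "idm C T \<in> fib" and t: "t \<in> hom C Y T" "t \<in> fib"
    using Y unfolding fibrant_def cofibrant_def by auto
  have "fibrant C fib T"
    using cat.initial_cofibrant[OF cat_op T(1), of fib] T(2) by simp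
  with Y t d have lift: "llp C d t"
    unfolding acyclic_cof_def by (auto simp: hom_def)
  have d_hom: "d \<in> hom C (src C d) (tgt C d)"
    using d cofibration_class_arr[OF cofibration_class] unfolding acyclic_cof_def hom_def by auto
  then have "tgt C d \<in> obj C"
    by (simp add: hom_def)
  then obtain v where v: "v \<in> hom C (tgt C d) T"
    using T(1) unfolding is_initial_def by auto
  have "cmp C t f = cmp C v d"
    using cat.initial_unique[OF cat_op T(1)] comp_in_hom[OF f t(1)] comp_in_hom[OF d_hom v]
    by simp
  moreover have "f \<in> hom C (src C d) (src C t)" "v \<in> hom C (tgt C d) (tgt C t)"
    using f v t(1) by (auto simp: hom_def)
  ultimately obtain h where "h \<in> hom C (tgt C d) (src C t)" "cmp C h d = f"
    using lift unfolding llp_def by blast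
  with t(1) show thesis
    using that by (simp add: hom_def)
qed

lemma weak_cylinderD:
  assumes "weak_cylinder C cof fib X c"
  shows "is_coproduct C X (tgt C (cin1 c)) (cin1 c) (cin2 c)"
    and "cincl c \<in> cof"
    and "cincl c \<in> hom C (tgt C (cin1 c)) (tgt C (cincl c))"
    and "cyl_inc1 C c \<in> hom C X (tgt C (cincl c))"
    and "cyl_inc2 C c \<in> hom C X (tgt C (cincl c))"
    and "acyclic_cof C cof fib (cyl_inc1 C c)"
proof -
  show cp: "is_coproduct C X (tgt C (cin1 c)) (cin1 c) (cin2 c)" and "cincl c \<in> cof"
    and "acyclic_cof C cof fib (cyl_inc1 C c)"
    using assms unfolding weak_cylinder_def cyl_inc1_def by blast+
  then show incl: "cincl c \<in> hom C (tgt C (cin1 c)) (tgt C (cincl c))"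
    using assms cofibration_class_arr[OF cofibration_class]
    unfolding weak_cylinder_def hom_def by auto
  show "cyl_inc1 C c \<in> hom C X (tgt C (cincl c))" "cyl_inc2 C c \<in> hom C X (tgt C (cincl c))"
    unfolding cyl_inc1_def cyl_inc2_def using coproduct_injections[OF cp] incl by blast+
qed

lemma weak_pathD:
  assumes "weak_path C cof fib Y p"
  shows "is_coproduct (op C) Y (src C (cin1 p)) (cin1 p) (cin2 p)"
    and "cincl p \<in> fib"
    and "cincl p \<in> hom C (src C (cincl p)) (src C (cin1 p))"
    and "path_ev1 C p \<in> hom C (src C (cincl p)) Y"
    and "path_ev2 C p \<in> hom C (src C (cincl p)) Y"
    and "acyclic_fib C cof fib (path_ev1 C p)"
  using cof_fib_category.weak_cylinderD[OF dual, of Y p] assms by simp_all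

lemma homotopic_cyl_iff:
  assumes "weak_cylinder C cof fib X c"
  shows "homotopic_cyl C X Y c f g \<longleftrightarrow> f \<in> hom C X Y \<and> g \<in> hom C X Y \<and>
    (\<exists>H \<in> hom C (tgt C (cincl c)) Y. cmp C H (cyl_inc1 C c) = f \<and> cmp C H (cyl_inc2 C c) = g)"
proof -
  have in12: "cin1 c \<in> hom C X (tgt C (cin1 c))" "cin2 c \<in> hom C X (tgt C (cin1 c))"
    and incl: "cincl c \<in> hom C (tgt C (cin1 c)) (tgt C (cincl c))"
    using weak_cylinderD[OF assms] coproduct_injections by auto
  have ends: "cmp C (cmp C H (cincl c)) (cin1 c) = cmp C H (cyl_inc1 C c)"
    "cmp C (cmp C H (cincl c)) (cin2 c) = cmp C H (cyl_inc2 C c)"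
    if "H \<in> hom C (tgt C (cincl c)) Y" for H
    using that in12 incl by (simp_all add: hom_def comp_assoc cyl_inc1_def cyl_inc2_def)
  show ?thesis
  proof
    assume "homotopic_cyl C X Y c f g"
    then obtain H where "f \<in> hom C X Y" "g \<in> hom C X Y" "H \<in> hom C (tgt C (cincl c)) Y"
      "cmp C (cmp C H (cincl c)) (cin1 c) = f" "cmp C (cmp C H (cincl c)) (cin2 c) = g"
      unfolding homotopic_cyl_def by blast
    with ends show "f \<in> hom C X Y \<and> g \<in> hom C X Y \<and>
      (\<exists>H \<in> hom C (tgt C (cincl c)) Y. cmp C H (cyl_inc1 C c) = f \<and> cmp C H (cyl_inc2 C c) = g)"
      by metis
  next
    assume "f \<in> hom C X Y \<and> g \<in> hom C X Y \<and>
      (\<exists>H \<in> hom C (tgt C (cincl c)) Y. cmp C H (cyl_inc1 C c) = f \<and> cmp C H (cyl_inc2 C c) = g)"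
    then obtain H where "f \<in> hom C X Y" "g \<in> hom C X Y" "H \<in> hom C (tgt C (cincl c)) Y"
      "cmp C H (cyl_inc1 C c) = f" "cmp C H (cyl_inc2 C c) = g"
      by blast
    moreover have "cmp C H (cincl c) \<in> hom C (tgt C (cin1 c)) Y"
      using incl \<open>H \<in> hom C (tgt C (cincl c)) Y\<close> by blast
    ultimately show "homotopic_cyl C X Y c f g"
      unfolding homotopic_cyl_def using ends by metis
  qed
qed

lemma homotopic_path_iff:
  assumes "weak_path C cof fib Y p"
  shows "homotopic_path C X Y p f g \<longleftrightarrow> f \<in> hom C X Y \<and> g \<in> hom C X Y \<and>
    (\<exists>K \<in> hom C X (src C (cincl p)). cmp C (path_ev1 C p) K = f \<and> cmp C (path_ev2 C p) K = g)"
  using cof_fib_category.homotopic_cyl_iff[OF dual, of Y p X f g] assms by simp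

lemma homotopic_cyl_refl:
  assumes c: "weak_cylinder C cof fib X c" and Y: "fibrant C fib Y" and f: "f \<in> hom C X Y"
  shows "homotopic_cyl C X Y c f f"
proof -
  have d: "acyclic_cof C cof fib (cd c)" "src C (cd c) = X"
    and q: "cq c \<in> hom C (tgt C (cincl c)) (tgt C (cd c))"
      "cmp C (cq c) (cincl c) = cmp C (cd c) (ccodiag c)"
    and codiag: "ccodiag c \<in> hom C (tgt C (cin1 c)) X"
      "cmp C (ccodiag c) (cin1 c) = idm C X" "cmp C (ccodiag c) (cin2 c) = idm C X"
    using c unfolding weak_cylinder_def by auto
  obtain h where h: "h \<in> hom C (tgt C (cd c)) Y" "cmp C h (cd c) = f"
    using acyclic_cof_extension[OF d(1) Y] f d(2) by auto
  have "cd c \<in> hom C X (tgt C (cd c))"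
    using d cofibration_class_arr[OF cofibration_class] unfolding acyclic_cof_def hom_def by auto
  have const: "cmp C (cmp C h (cq c)) (cmp C (cincl c) i) = f"
    if "i \<in> hom C X (tgt C (cin1 c))" "cmp C (ccodiag c) i = idm C X" for i
  proof -
    have "cmp C (cmp C h (cq c)) (cmp C (cincl c) i) = cmp C h (cmp C (cmp C (cq c) (cincl c)) i)"
      using that h q(1) weak_cylinderD(3)[OF c] by (auto simp: hom_def comp_assoc)
    also have "\<dots> = cmp C h (cmp C (cmp C (cd c) (ccodiag c)) i)"
      by (simp add: q(2))
    also have "\<dots> = cmp C (cmp C h (cd c)) (cmp C (ccodiag c) i)"
      using that h codiag \<open>cd c \<in> hom C X (tgt C (cd c))\<close> by (auto simp: hom_def comp_assoc)
    finally show ?thesis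
      using that h f by (simp add: hom_def)
  qed
  have "cmp C h (cq c) \<in> hom C (tgt C (cincl c)) Y"
    using q h by blast
  moreover have "cin1 c \<in> hom C X (tgt C (cin1 c))" "cin2 c \<in> hom C X (tgt C (cin1 c))"
    using coproduct_injections[OF weak_cylinderD(1)[OF c]] by auto
  ultimately show ?thesis
    using const[of "cin1 c"] const[of "cin2 c"] f codiag
    unfolding homotopic_cyl_iff[OF c] cyl_inc1_def cyl_inc2_def by blast
qed

lemma homotopic_path_refl:
  assumes "weak_path C cof fib Y p" "cofibrant C cof X" "f \<in> hom C X Y"
  shows "homotopic_path C X Y p f f"
  using cof_fib_category.homotopic_cyl_refl[OF dual, of Y p X f] assms by simp

lemma homotopic_path_transport:
  assumes c: "weak_cylinder C cof fib X c" and p: "weak_path C cof fib Y p"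
    and Y: "fibrant C fib Y"
    and V1: "V1 \<in> hom C (tgt C (cincl c)) Y" and V2: "V2 \<in> hom C (tgt C (cincl c)) Y"
    and "homotopic_path C X Y p (cmp C V1 (cyl_inc1 C c)) (cmp C V2 (cyl_inc1 C c))"
  shows "homotopic_path C X Y p (cmp C V1 (cyl_inc2 C c)) (cmp C V2 (cyl_inc2 C c))"
proof -
  note prod = weak_pathD(1)[OF p] and incl = weak_pathD(3)[OF p]
    and j1 = weak_cylinderD(4)[OF c] and j2 = weak_cylinderD(5)[OF c]
  have "fibrant C fib (src C (cin1 p))"
    using fibrant_product[OF Y prod] .
  moreover have "fibrant C fib (src C (cincl p))"
    using fibrant_src[of "path_ev1 C p"] weak_pathD(4,6)[OF p] Y
    unfolding acyclic_fib_def by (auto simp: hom_def)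
  ultimately have lift: "llp C (cyl_inc1 C c) (cincl p)"
    using weak_cylinderD(6)[OF c] weak_pathD(2,3)[OF p] unfolding acyclic_cof_def hom_def by auto
  obtain K where K: "K \<in> hom C X (src C (cincl p))"
    "cmp C (path_ev1 C p) K = cmp C V1 (cyl_inc1 C c)"
    "cmp C (path_ev2 C p) K = cmp C V2 (cyl_inc1 C c)"
    using assms(6) unfolding homotopic_path_iff[OF p] by blast
  obtain V where V: "V \<in> hom C (tgt C (cincl c)) (src C (cin1 p))"
    "cmp C (cin1 p) V = V1" "cmp C (cin2 p) V = V2"
    using coproduct_universal[OF prod, of V1 "tgt C (cincl c)" V2] V1 V2 by auto
  have proj: "cin1 p \<in> hom C (src C (cin1 p)) Y" "cin2 p \<in> hom C (src C (cin1 p)) Y"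
    using coproduct_injections[OF prod] by simp_all
  have "cmp C (cincl p) K = cmp C V (cyl_inc1 C c)"
  proof (rule cat.coproduct_eqI[OF cat_op prod])
    show "cmp C (cincl p) K \<in> hom (op C) (src C (cin1 p)) X"
      "cmp C V (cyl_inc1 C c) \<in> hom (op C) (src C (cin1 p)) X"
      using K(1) incl V(1) j1 by auto
    show "cmp (op C) (cmp C (cincl p) K) (cin1 p) = cmp (op C) (cmp C V (cyl_inc1 C c)) (cin1 p)"
      "cmp (op C) (cmp C (cincl p) K) (cin2 p) = cmp (op C) (cmp C V (cyl_inc1 C c)) (cin2 p)"
      using K V proj incl j1 by (auto simp: path_ev1_def path_ev2_def hom_def comp_assoc)
  qed
  then obtain L where L: "L \<in> hom C (tgt C (cincl c)) (src C (cincl p))" "cmp C (cincl p) L = V"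
    using lift K(1) V(1) j1 incl unfolding llp_def hom_def by auto
  have "cmp C (cmp C q (cincl p)) (cmp C L (cyl_inc2 C c)) = cmp C (cmp C q V) (cyl_inc2 C c)"
    if "q \<in> hom C (src C (cin1 p)) Y" for q
    using that L incl j2 by (auto simp: hom_def comp_assoc)
  then have "cmp C (path_ev1 C p) (cmp C L (cyl_inc2 C c)) = cmp C V1 (cyl_inc2 C c)"
    and "cmp C (path_ev2 C p) (cmp C L (cyl_inc2 C c)) = cmp C V2 (cyl_inc2 C c)"
    using proj V by (simp_all add: path_ev1_def path_ev2_def)
  moreover have "cmp C L (cyl_inc2 C c) \<in> hom C X (src C (cincl p))"
    using L(1) j2 by blast
  ultimately show ?thesis
    unfolding homotopic_path_iff[OF p] using V1 V2 j2 by blast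
qed

end

locale homotopy_setting = cof_fib_category +
  fixes X Y :: 'o and c p :: "'a cyl_data"
  assumes X_cofibrant: "cofibrant C cof X" and Y_fibrant: "fibrant C fib Y"
    and cylinder: "weak_cylinder C cof fib X c" and path: "weak_path C cof fib Y p"

lemma (in cof_fib_category) homotopy_settingI:
  "cofibrant C cof X \<Longrightarrow> fibrant C fib Y \<Longrightarrow> weak_cylinder C cof fib X c \<Longrightarrow>
    weak_path C cof fib Y p \<Longrightarrow> homotopy_setting C cof fib X Y c p"
  using cof_fib_category_axioms by (simp add: homotopy_setting_def homotopy_setting_axioms_def)

lemma (in homotopy_setting) homotopy_setting_dual: "homotopy_setting (op C) fib cof Y X p c"
  using cof_fib_category.homotopy_settingI[OF dual] X_cofibrant Y_fibrant cylinder path by simp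

context homotopy_setting
begin

lemma constant_cyl_homotopy:
  assumes "f \<in> hom C X Y"
  obtains E where "E \<in> hom C (tgt C (cincl c)) Y" "cmp C E (cyl_inc1 C c) = f" "cmp C E (cyl_inc2 C c) = f"
  using homotopic_cyl_refl[OF cylinder Y_fibrant assms] that
  unfolding homotopic_cyl_iff[OF cylinder] by blast

lemma homotopic_cyl_imp_path:
  assumes "homotopic_cyl C X Y c f g"
  shows "homotopic_path C X Y p f g"
proof -
  obtain H where f: "f \<in> hom C X Y" and H: "H \<in> hom C (tgt C (cincl c)) Y"
    "cmp C H (cyl_inc1 C c) = f" "cmp C H (cyl_inc2 C c) = g"
    using assms unfolding homotopic_cyl_iff[OF cylinder] by blast
  obtain E where E: "E \<in> hom C (tgt C (cincl c)) Y"
    "cmp C E (cyl_inc1 C c) = f" "cmp C E (cyl_inc2 C c) = f"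
    using constant_cyl_homotopy[OF f] .
  have "homotopic_path C X Y p f f"
    using homotopic_path_refl[OF path X_cofibrant f] .
  then show ?thesis
    using homotopic_path_transport[OF cylinder path Y_fibrant E(1) H(1)] E H by simp
qed

lemma homotopic_cyl_path_trans:
  assumes "homotopic_cyl C X Y c g f" and "homotopic_path C X Y p g h"
  shows "homotopic_path C X Y p f h"
proof -
  obtain H where H: "H \<in> hom C (tgt C (cincl c)) Y"
    "cmp C H (cyl_inc1 C c) = g" "cmp C H (cyl_inc2 C c) = f"
    using assms(1) unfolding homotopic_cyl_iff[OF cylinder] by blast
  have "h \<in> hom C X Y"
    using assms(2) unfolding homotopic_path_iff[OF path] by blast
  then obtain E where E: "E \<in> hom C (tgt C (cincl c)) Y"
    "cmp C E (cyl_inc1 C c) = h" "cmp C E (cyl_inc2 C c) = h"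
    by (rule constant_cyl_homotopy)
  show ?thesis
    using homotopic_path_transport[OF cylinder path Y_fibrant H(1) E(1)] assms(2) E H by simp
qed

lemma homotopic_path_imp_cyl: "homotopic_path C X Y p f g \<Longrightarrow> homotopic_cyl C X Y c f g"
  using homotopy_setting.homotopic_cyl_imp_path[OF homotopy_setting_dual] by simp

lemma homotopic_cyl_iff_path: "homotopic_cyl C X Y c f g \<longleftrightarrow> homotopic_path C X Y p f g"
  using homotopic_cyl_imp_path homotopic_path_imp_cyl by blast

lemma homotopic_cyl_sym:
  assumes "homotopic_cyl C X Y c f g"
  shows "homotopic_cyl C X Y c g f"
proof -
  have "homotopic_path C X Y p f f"
    using assms homotopic_path_refl[OF path X_cofibrant] unfolding homotopic_cyl_def by blast
  with assms have "homotopic_path C X Y p g f"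
    by (rule homotopic_cyl_path_trans)
  then show ?thesis
    by (rule homotopic_path_imp_cyl)
qed

lemma homotopic_cyl_trans:
  assumes "homotopic_cyl C X Y c f g" and "homotopic_cyl C X Y c g h"
  shows "homotopic_cyl C X Y c f h"
proof -
  have "homotopic_path C X Y p f h"
    using homotopic_cyl_sym[OF assms(1)] homotopic_cyl_imp_path[OF assms(2)]
    by (rule homotopic_cyl_path_trans)
  then show ?thesis
    by (rule homotopic_path_imp_cyl)
qed

lemma equiv_homotopic_cyl: "equiv (hom C X Y) {(f, g). homotopic_cyl C X Y c f g}"
  using homotopic_cyl_refl[OF cylinder Y_fibrant] homotopic_cyl_sym homotopic_cyl_trans
  unfolding equiv_def refl_on_def sym_def trans_def homotopic_cyl_def[of C X Y c]
  by blast

lemma equiv_homotopic_path: "equiv (hom C X Y) {(f, g). homotopic_path C X Y p f g}"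
  using equiv_homotopic_cyl by (simp add: homotopic_cyl_iff_path)

end

lemma (in cof_fib_category) homotopic_iff_homotopic_cyl:
  assumes X: "cofibrant C cof X" and Y: "fibrant C fib Y"
    and c: "weak_cylinder C cof fib X c" and p: "weak_path C cof fib Y p"
  shows "homotopic C cof fib X Y f g \<longleftrightarrow> homotopic_cyl C X Y c f g"
  using homotopy_setting.homotopic_cyl_iff_path[OF homotopy_settingI[OF X Y]] c p
  unfolding homotopic_def by blast

theorem theorem2p1p17:
  fixes C :: "('o, 'a) category" and cof fib :: "'a set" and X Y :: 'o
  assumes "is_category C"
    and "cofibration_class C cof"
    and "fibration_class C fib"
    and "cofibrant C cof X"
    and "fibrant C fib Y"
    and "\<exists>c. weak_cylinder C cof fib X c"
    and "\<exists>p. weak_path C cof fib Y p"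
  shows "equiv (hom C X Y) {(f, g). homotopic C cof fib X Y f g}
    \<and> (\<forall>c. weak_cylinder C cof fib X c \<longrightarrow>
           equiv (hom C X Y) {(f, g). homotopic_cyl C X Y c f g})
    \<and> (\<forall>p. weak_path C cof fib Y p \<longrightarrow>
           equiv (hom C X Y) {(f, g). homotopic_path C X Y p f g})
    \<and> (\<forall>c p f g. weak_cylinder C cof fib X c \<and> weak_path C cof fib Y p \<longrightarrow>
           (homotopic_cyl C X Y c f g \<longleftrightarrow> homotopic_path C X Y p f g))"
proof -
  interpret cof_fib_category C cof fib
    using assms(1-3) by (simp add: cof_fib_category_def cof_fib_category_axioms_def cat_def)
  obtain c0 p0 where c0: "weak_cylinder C cof fib X c0" and p0: "weak_path C cof fib Y p0"
    using assms(6,7) by blast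
  note setting = homotopy_settingI[OF assms(4,5)]
  have "{(f, g). homotopic C cof fib X Y f g} = {(f, g). homotopic_cyl C X Y c0 f g}"
    using homotopic_iff_homotopic_cyl[OF assms(4,5) c0 p0] by simp
  then show ?thesis
    using homotopy_setting.equiv_homotopic_cyl[OF setting] homotopy_setting.equiv_homotopic_path[OF setting]
      homotopy_setting.homotopic_cyl_iff_path[OF setting] c0 p0
    by metis
qed

end
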